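(* Let $d,N\ge 1$ be integers, let $\mathbb{K},\mathbb{M}$ be real skew-symmetric $d\times d$ matrices, let $S:\mathbb{R}^d\to\mathbb{R}$ be smooth, and let $\mathcal{D}_h$ be a real skew-symmetric $N\times N$ matrix; put $\mathcal{C}_h=\mathcal{D}_h\otimes\mathbb{I}_d$. Let $z_h(t)\in\mathbb{R}^{dN}$ be a differentiable solution of $$(\mathbb{I}_N\otimes\mathbb{K})\,\frac{dz_h}{dt}(t)+(\mathcal{D}_h\otimes\mathbb{M})\,z_h(t)=\nabla\widetilde S_h\big(z_h(t)\big),$$ where $\widetilde S_h(z)=\sum_{j=0}^{N-1}S(z_j)$ for $z=(z_0,\dots,z_{N-1})$, $z_j\in\mathbb{R}^d$. Define $$\mathcal{I}_h(t)=\tfrac12\, z_h(t)^{\top}(\mathcal{D}_h\otimes\mathbb{K})\,z_h(t),\qquad \mathfrak{M}_h(t)=\widetilde S_h\big(z_h(t)\big)-\tfrac12\, z_h(t)^{\top}(\mathbb{I}_N\otimes\mathbb{K})\,\frac{dz_h}{dt}(t).$$ Then $$\frac{d\mathcal{I}_h}{dt}+\nabla_h\mathfrak{M}_h=0,$$ where $\nabla_h$ is the discrete spatial derivative described in the context.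
   Context: $\otimes$ is the Kronecker product, $\mathbb{I}_n$ the $n\times n$ identity. The discrete gradient is defined for smooth $Q:\mathbb{R}^{dN}\to\mathbb{R}$ by $\nabla_h Q(z)=\nabla Q(z)^{\top}\mathcal{C}_h z$ (chain rule with $\partial_x$ of the state replaced by $\mathcal{C}_h z$); for a quantity also involving $\dot z=dz_h/dt$, each occurrence of the state (including in $\dot z$) is differentiated this way, so explicitly $\nabla_h\mathfrak{M}_h=\nabla\widetilde S_h(z_h)^{\top}\mathcal{C}_h z_h-\tfrac12(\mathcal{C}_h z_h)^{\top}(\mathbb{I}_N\otimes\mathbb{K})\dot z_h-\tfrac12 z_h^{\top}(\mathbb{I}_N\otimes\mathbb{K})\,\mathcal{C}_h\dot z_h$. *)

theory Defs
  imports "HOL-Analysis.Analysis"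
begin

text \<open>Vectors in R^{dN} are indexed by pairs (j,a) with j the grid index (N values)
 and a the component index (d values); (j,a) corresponds to the flat index j*d+a.\<close>

definition kron :: "real^'n::finite^'n \<Rightarrow> real^'d::finite^'d \<Rightarrow> real^('n \<times> 'd)^('n \<times> 'd)" where
  "kron A B = (\<chi> p q. A $ fst p $ fst q * B $ snd p $ snd q)"

definition block :: "real^('n::finite \<times> 'd::finite) \<Rightarrow> 'n \<Rightarrow> real^'d" where
  "block z j = (\<chi> a. z $ (j, a))"

definition Stilde :: "(real^'d::finite \<Rightarrow> real) \<Rightarrow> real^('n::finite \<times> 'd) \<Rightarrow> real" where
  "Stilde S z = (\<Sum>j\<in>UNIV. S (block z j))"

definition grad :: "(real^'m \<Rightarrow> real) \<Rightarrow> real^'m \<Rightarrow> real^'m" where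
  "grad f x = (\<chi> i. frechet_derivative f (at x) (axis i 1))"

definition skew :: "real^'m^'m \<Rightarrow> bool" where
  "skew A \<longleftrightarrow> transpose A = - A"

end

theory Submission
  imports Defs
begin

text \<open>\<open>A = D \<otimes> K\<close> is symmetric as a Kronecker product of two skew matrices, so
  \<open>d\<I>\<^sub>h/dt = z\<^sup>T A z'\<close>. Substituting the equation for the gradient, the flux \<open>\<nabla>\<^sub>h\<M>\<^sub>h\<close>
  reduces to \<open>-z\<^sup>T A z'\<close>: the mixed-product rule turns \<open>(D \<otimes> I)\<^sup>T (I \<otimes> K)\<close> and
  \<open>(I \<otimes> K)(D \<otimes> I)\<close> into \<open>-A\<close> and \<open>A\<close>, and the term coming from \<open>D \<otimes> M\<close> is a quadratic
  form of the skew matrix \<open>(D\<^sup>T D) \<otimes> M\<^sup>T\<close>, hence vanishes.\<close>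

lemma inner_matrix_vector_mult_transpose:
  "(x::real^'m::finite) \<bullet> (A *v y) = (transpose A *v x) \<bullet> y"
  by (simp add: dot_lmul_matrix)

lemma uminus_matrix_vector_mult: "(- A) *v (x::real^'m::finite) = - (A *v x)"
  by (simp add: vec_eq_iff matrix_vector_mult_def sum_negf)

lemma skew_quadratic_form_eq_0:
  assumes "skew A"
  shows "(x::real^'m::finite) \<bullet> (A *v x) = 0"
proof -
  have "x \<bullet> (A *v x) = - ((A *v x) \<bullet> x)"
    using assms by (simp add: inner_matrix_vector_mult_transpose skew_def uminus_matrix_vector_mult)
  then show ?thesis
    by (simp add: inner_commute)
qed

lemma transpose_kron: "transpose (kron A B) = kron (transpose A) (transpose B)"
  by (simp add: kron_def transpose_def)

lemma kron_mult:
  fixes A C :: "real^'n::finite^'n" and B E :: "real^'d::finite^'d"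
  shows "kron A B ** kron C E = kron (A ** C) (B ** E)"
proof -
  have "(\<Sum>r\<in>UNIV. A $ i $ fst r * B $ a $ snd r * (C $ fst r $ j * E $ snd r $ b))
      = (\<Sum>k\<in>UNIV. A $ i $ k * C $ k $ j) * (\<Sum>c\<in>UNIV. B $ a $ c * E $ c $ b)"
    for i j a b
    by (simp add: sum_product sum.cartesian_product' flip: UNIV_Times_UNIV)
      (rule sum.cong, auto simp: mult_ac)
  then show ?thesis
    by (simp add: kron_def matrix_matrix_mult_def vec_eq_iff case_prod_beta)
qed

lemma symmetric_kron_skew:
  assumes "skew A" and "skew B"
  shows "transpose (kron A B) = kron A B"
  using assms unfolding skew_def transpose_kron by (simp add: kron_def vec_eq_iff)

lemma skew_kron_symmetric:
  assumes "transpose A = A" and "skew B"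
  shows "skew (kron A B)"
  using assms unfolding skew_def transpose_kron by (simp add: kron_def vec_eq_iff)

lemma has_real_derivative_quadratic_form:
  fixes z :: "real \<Rightarrow> real^'m::finite"
  assumes A_sym: "transpose A = A" and z: "(z has_vector_derivative v) (at t within S)"
  shows "((\<lambda>s. z s \<bullet> (A *v z s)) has_real_derivative 2 * (z t \<bullet> (A *v v))) (at t within S)"
proof -
  have "(z has_derivative (\<lambda>h. h *\<^sub>R v)) (at t within S)"
    using z by (simp add: has_vector_derivative_def)
  moreover from this have "((\<lambda>s. A *v z s) has_derivative (\<lambda>h. A *v (h *\<^sub>R v))) (at t within S)"
    by (rule bounded_linear.has_derivative[OF matrix_vector_mul_bounded_linear])
  ultimately have "((\<lambda>s. z s \<bullet> (A *v z s)) has_derivative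
      (\<lambda>h. z t \<bullet> (A *v (h *\<^sub>R v)) + (h *\<^sub>R v) \<bullet> (A *v z t))) (at t within S)"
    by (rule has_derivative_inner)
  moreover have "z t \<bullet> (A *v (h *\<^sub>R v)) + (h *\<^sub>R v) \<bullet> (A *v z t) = h * (2 * (z t \<bullet> (A *v v)))" for h
    using inner_matrix_vector_mult_transpose[of v A "z t"] A_sym
    by (simp add: matrix_vector_mult_scaleR inner_commute algebra_simps)
  ultimately show ?thesis
    by (simp add: has_field_derivative_def mult_commute_abs)
qed

lemma kron_flux_identity:
  fixes D :: "real^'n::finite^'n" and K M :: "real^'d::finite^'d" and x v :: "real^('n \<times> 'd)"
  assumes D: "skew D" and M: "skew M"
  defines "C \<equiv> kron D (mat 1)" and "IK \<equiv> kron (mat 1) K"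
  shows "(IK *v v + kron D M *v x) \<bullet> (C *v x) - (1/2) * ((C *v x) \<bullet> (IK *v v))
      - (1/2) * (x \<bullet> (IK *v (C *v v))) = - (x \<bullet> (kron D K *v v))"
proof -
  have "transpose C ** IK = kron (transpose D) K"
    by (simp add: C_def IK_def transpose_kron kron_mult)
  also have "\<dots> = - kron D K"
    using D by (simp add: skew_def kron_def vec_eq_iff)
  finally have "transpose C ** IK = - kron D K" .
  then have IK_C: "(IK *v v) \<bullet> (C *v x) = - (x \<bullet> (kron D K *v v))"
    using inner_matrix_vector_mult_transpose[of "IK *v v" C x]
    by (simp add: matrix_vector_mul_assoc uminus_matrix_vector_mult inner_commute)
  have "skew (transpose (kron D M) ** C)"
  proof -
    have "transpose (kron D M) ** C = kron (transpose D ** D) (transpose M)"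
      by (simp add: C_def transpose_kron kron_mult)
    moreover have "skew (transpose M)"
      using M unfolding skew_def transpose_transpose by simp
    ultimately show ?thesis
      by (simp add: skew_kron_symmetric matrix_transpose_mul)
  qed
  then have "(kron D M *v x) \<bullet> (C *v x) = 0"
    using inner_matrix_vector_mult_transpose[of "C *v x" "kron D M" x]
    by (simp add: skew_quadratic_form_eq_0 matrix_vector_mul_assoc inner_commute)
  moreover have "IK *v (C *v v) = kron D K *v v"
    by (simp add: IK_def C_def matrix_vector_mul_assoc kron_mult)
  ultimately show ?thesis
    using IK_C by (simp add: inner_add_right inner_commute)
qed

theorem theorem3:
  fixes K M :: "real^'d^'d" and D :: "real^'n^'n"
    and S :: "real^'d \<Rightarrow> real"
    and z z' :: "real \<Rightarrow> real^('n \<times> 'd)"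
    and T :: "real set"
  assumes skK: "skew K" and skM: "skew M" and skD: "skew D"
    and S_smooth: "\<And>x. S differentiable (at x)"
    and T_open: "open T"
    and z_deriv: "\<And>t. t \<in> T \<Longrightarrow> (z has_vector_derivative z' t) (at t)"
    and eqn: "\<And>t. t \<in> T \<Longrightarrow>
       kron (mat 1) K *v z' t + kron D M *v z t = grad (Stilde S) (z t)"
    and t_in: "t \<in> T"
  shows "((\<lambda>s. (1/2) * (z s \<bullet> (kron D K *v z s))) has_real_derivative
           - (grad (Stilde S) (z t) \<bullet> (kron D (mat 1) *v z t)
              - (1/2) * ((kron D (mat 1) *v z t) \<bullet> (kron (mat 1) K *v z' t))
              - (1/2) * (z t \<bullet> (kron (mat 1) K *v (kron D (mat 1) *v z' t))))) (at t)"
proof -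
  have "((\<lambda>s. z s \<bullet> (kron D K *v z s)) has_real_derivative 2 * (z t \<bullet> (kron D K *v z' t))) (at t)"
    using symmetric_kron_skew[OF skD skK] z_deriv[OF t_in] by (rule has_real_derivative_quadratic_form)
  from DERIV_cmult[OF this, of "1/2"] show ?thesis
    using kron_flux_identity[OF skD skM, where x = "z t" and v = "z' t"] by (simp flip: eqn[OF t_in])
qed

end
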